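(* Let $X_1,X_2$ be Banach spaces and $X=X_1\times X_2$ with norm $\|(x,y)\|^2=\|x\|_{X_1}^2+\|y\|_{X_2}^2$. For $j=1,2$ let $-\mathbf{A}_j:\mathrm{dom}(\mathbf{A}_j)\subset X_j\to X_j$ be the generator of a strongly continuous contraction semigroup $(\mathrm{e}^{-t\mathbf{A}_j})_{t\ge0}$, and let $\mathbf{B}_1:X_2\to X_1$ and $\mathbf{B}_2:X_1\to X_2$ be bounded linear operators. Let $\mathcal{T}(\tau)$, $\tau\ge0$, be the split-step operators and $\mathcal{C}$ the coupled operator defined in the context. Then for all $t\in[0,\infty)$ and $n\in\mathbb{N}$, \[ \|\mathcal{T}(t/n)^n\|\le \mathrm{e}^{t(\|\mathbf{B}_1\|+\|\mathbf{B}_2\|)}. \] Moreover, for every $t\ge0$ and every $x\in X$ we have $\lim_{n\to\infty}\mathcal{T}(t/n)^n x=\mathrm{e}^{-t\mathcal{C}}x$, and this convergence is uniform in $t$ on bounded time intervals.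
   Context: For $\tau\ge0$ set $\mathbf{E}_j(\tau)=\mathrm{e}^{-\tau\mathbf{A}_j}$ and $\mathbf{X}_j(\tau)=\int_0^\tau \mathrm{e}^{-\sigma\mathbf{A}_j}\,\mathrm{d}\sigma\,\mathbf{B}_j$ (the integral taken in the strong sense), so $\mathbf{X}_1(\tau):X_2\to X_1$, $\mathbf{X}_2(\tau):X_1\to X_2$. The split-step approximation operator on $X$ is the block operator matrix \[ \mathcal{T}(\tau)=\begin{pmatrix}\mathbf{E}_1(\tau) & \mathbf{X}_1(\tau)\\ \mathbf{X}_2(\tau)\mathbf{E}_1(\tau) & \mathbf{X}_2(\tau)\mathbf{X}_1(\tau)+\mathbf{E}_2(\tau)\end{pmatrix}, \] i.e. $\mathcal{T}(\tau)=\mathcal{T}_2(\tau)\mathcal{T}_1(\tau)$ with $\mathcal{T}_1(\tau)=\begin{pmatrix}\mathbf{E}_1(\tau)&\mathbf{X}_1(\tau)\\0&\mathbf{I}\end{pmatrix}$, $\mathcal{T}_2(\tau)=\begin{pmatrix}\mathbf{I}&0\\\mathbf{X}_2(\tau)&\mathbf{E}_2(\tau)\end{pmatrix}$. Let $\mathcal{A}=\mathrm{diag}(\mathbf{A}_1,\mathbf{A}_2)$ with $\mathrm{dom}(\mathcal{A})=\mathrm{dom}(\mathbf{A}_1)\times\mathrm{dom}(\mathbf{A}_2)$, $\mathcal{B}=\begin{pmatrix}0&\mathbf{B}_1\\\mathbf{B}_2&0\end{pmatrix}$, and $\mathcal{C}=\mathcal{A}-\mathcal{B}$ with $\mathrm{dom}(\mathcal{C})=\mathrm{dom}(\mathcal{A})$,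 i.e. $-\mathcal{C}(u,v)^{\mathrm T}=(-\mathbf{A}_1u+\mathbf{B}_1v,\ \mathbf{B}_2u-\mathbf{A}_2v)^{\mathrm T}$; $-\mathcal{C}$ generates a strongly continuous semigroup $(\mathrm{e}^{-t\mathcal{C}})_{t\ge0}$ on $X$. *)

theory Defs
  imports "HOL-Analysis.Analysis"
begin

text \<open>Strongly continuous (C0) semigroup of bounded linear operators on a Banach space,
  indexed by real times (only \<open>t \<ge> 0\<close> is relevant).\<close>
definition C0_semigroup :: "(real \<Rightarrow> 'a::banach \<Rightarrow> 'a) \<Rightarrow> bool" where
  "C0_semigroup T \<longleftrightarrow>
     (\<forall>t\<ge>0. bounded_linear (T t)) \<and>
     T 0 = id \<and>
     (\<forall>s\<ge>0. \<forall>t\<ge>0. T (s + t) = T s \<circ> T t) \<and>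
     (\<forall>x. ((\<lambda>t. T t x) \<longlongrightarrow> x) (at_right 0))"

definition contraction_semigroup :: "(real \<Rightarrow> 'a::banach \<Rightarrow> 'a) \<Rightarrow> bool" where
  "contraction_semigroup T \<longleftrightarrow> C0_semigroup T \<and> (\<forall>t\<ge>0. onorm (T t) \<le> 1)"

definition gen_dom :: "(real \<Rightarrow> 'a::real_normed_vector \<Rightarrow> 'a) \<Rightarrow> 'a set" where
  "gen_dom T = {x. \<exists>y. ((\<lambda>h. (T h x - x) /\<^sub>R h) \<longlongrightarrow> y) (at_right 0)}"

definition gen :: "(real \<Rightarrow> 'a::real_normed_vector \<Rightarrow> 'a) \<Rightarrow> 'a \<Rightarrow> 'a" where
  "gen T x = Lim (at_right 0) (\<lambda>h. (T h x - x) /\<^sub>R h)"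

text \<open>\<open>X_j(\<tau>) = \<integral>_0^\<tau> e^{-\<sigma> A_j} d\<sigma> B_j\<close> (strong integral), with \<open>E = e^{-\<cdot> A_j}\<close>.\<close>
definition Xop :: "(real \<Rightarrow> 'a::banach \<Rightarrow> 'a) \<Rightarrow> ('b \<Rightarrow> 'a) \<Rightarrow> real \<Rightarrow> 'b \<Rightarrow> 'a" where
  "Xop E B \<tau> v = integral {0..\<tau>} (\<lambda>\<sigma>. E \<sigma> (B v))"

definition split_T1 ::
  "(real \<Rightarrow> 'a::banach \<Rightarrow> 'a) \<Rightarrow> ('b::banach \<Rightarrow> 'a) \<Rightarrow> real \<Rightarrow> 'a \<times> 'b \<Rightarrow> 'a \<times> 'b" where
  "split_T1 E1 B1 \<tau> p = (E1 \<tau> (fst p) + Xop E1 B1 \<tau> (snd p), snd p)"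

definition split_T2 ::
  "(real \<Rightarrow> 'b::banach \<Rightarrow> 'b) \<Rightarrow> ('a::banach \<Rightarrow> 'b) \<Rightarrow> real \<Rightarrow> 'a \<times> 'b \<Rightarrow> 'a \<times> 'b" where
  "split_T2 E2 B2 \<tau> p = (fst p, Xop E2 B2 \<tau> (fst p) + E2 \<tau> (snd p))"

definition split_T ::
  "(real \<Rightarrow> 'a::banach \<Rightarrow> 'a) \<Rightarrow> (real \<Rightarrow> 'b::banach \<Rightarrow> 'b) \<Rightarrow> ('b \<Rightarrow> 'a) \<Rightarrow> ('a \<Rightarrow> 'b)
    \<Rightarrow> real \<Rightarrow> 'a \<times> 'b \<Rightarrow> 'a \<times> 'b" where
  "split_T E1 E2 B1 B2 \<tau> = split_T2 E2 B2 \<tau> \<circ> split_T1 E1 B1 \<tau>"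

end

theory Submission
  imports Defs
begin

(*
  The split step is stable: T1(tau) and T2(tau) are shears of contractions by operators of
  norm at most tau ||B1|| and tau ||B2||, so ||T(t/n)^n|| <= exp (t (||B1|| + ||B2||)).
  It is consistent on the generator domain: for z there, U(tau) z - z and T(tau) z - z are
  integrals over [0, tau] of the orbits of gen U z under U and under the decoupled semigroup
  diag (E1, E2), up to a coupling remainder of order tau^2, so the local error is o(tau),
  uniformly along a compact piece of the orbit of z. Telescoping (Lady Windermere's fan) turns
  stability and consistency into convergence on the domain, uniformly for bounded times, and
  density of the domain together with stability extends it to all initial values.
*)

lemma uniform_boundedness_principle:
  fixes F :: "nat \<Rightarrow> 'a::banach \<Rightarrow> 'b::real_normed_vector"
  assumes lin: "\<And>n. bounded_linear (F n)"
    and pointwise: "\<And>x. \<exists>B. \<forall>n. norm (F n x) \<le> B"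
  shows "\<exists>M. \<forall>n. onorm (F n) \<le> M"
proof -
  define G where "G k = {x. \<forall>n. norm (F n x) \<le> real k}" for k :: nat
  have closed_G: "closed (G k)" for k
  proof -
    have "G k = (\<Inter>n. {x. norm (F n x) \<le> real k})" by (auto simp: G_def)
    moreover have "closed {x. norm (F n x) \<le> real k}" for n
      by (intro closed_Collect_le continuous_on_norm linear_continuous_on lin continuous_on_const)
    ultimately show ?thesis by auto
  qed
  have cover: "(\<Union>k. G k) = UNIV"
  proof (intro equalityI subsetI)
    fix x
    obtain B where B: "\<forall>n. norm (F n x) \<le> B" using pointwise by blast
    have "norm (F n x) \<le> real (nat \<lceil>B\<rceil>)" for n
      using B[rule_format, of n] real_nat_ceiling_ge[of B] by linarith
    then have "x \<in> G (nat \<lceil>B\<rceil>)" by (simp add: G_def)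
    then show "x \<in> (\<Union>k. G k)" by blast
  qed simp
  have "\<exists>k. interior (G k) \<noteq> {}"
  proof (rule ccontr)
    assume "\<not> ?thesis"
    then have "euclidean interior_of \<Union>(range G) = {}"
      by (intro Baire_category_alt) (auto simp: completely_metrizable_space_euclidean
          euclidean_interior_of closed_G closed_closedin[symmetric])
    then show False using cover by (simp add: euclidean_interior_of)
  qed
  then obtain k x0 where "x0 \<in> interior (G k)" by blast
  then obtain r where r: "r > 0" "ball x0 r \<subseteq> G k"
    by (meson open_contains_ball_eq open_interior interior_subset order_trans)
  have small: "norm (F n y) \<le> 2 * real k" if "norm y < r" for n y
  proof -
    have "x0 + y \<in> G k" "x0 \<in> G k" using r that by (auto simp: dist_norm)
    then have "norm (F n (x0 + y)) \<le> real k" "norm (F n x0) \<le> real k" by (auto simp: G_def)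
    moreover have "F n y = F n (x0 + y) - F n x0"
      by (simp add: linear_add[OF bounded_linear.linear[OF lin]])
    then have "norm (F n y) \<le> norm (F n (x0 + y)) + norm (F n x0)"
      by (metis norm_triangle_ineq4)
    ultimately show ?thesis by linarith
  qed
  have "onorm (F n) \<le> 4 * real k / r" for n
  proof (rule onorm_bound)
    show "0 \<le> 4 * real k / r" using r by simp
  next
    fix y
    show "norm (F n y) \<le> 4 * real k / r * norm y"
    proof (cases "y = 0")
      case True then show ?thesis using linear_0[OF bounded_linear.linear[OF lin]] by simp
    next
      case False
      define c where "c = r / (2 * norm y)"
      have c: "c > 0" "norm (c *\<^sub>R y) < r" using False r by (simp_all add: c_def)
      have "c * norm (F n y) = norm (F n (c *\<^sub>R y))"
        using c by (simp add: linear_scale[OF bounded_linear.linear[OF lin]])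
      also have "\<dots> \<le> 2 * real k" using c by (intro small)
      finally have "norm (F n y) \<le> 2 * real k / c" using c by (simp add: field_simps)
      also have "2 * real k / c = 4 * real k / r * norm y" using False r by (simp add: c_def field_simps)
      finally show ?thesis .
    qed
  qed
  then show ?thesis by blast
qed

lemma tendsto_integral_average_right:
  fixes g :: "real \<Rightarrow> 'a::banach"
  assumes g: "continuous_on {u..b} g" and "u < b"
  shows "((\<lambda>h. integral {u..u + h} g /\<^sub>R h) \<longlongrightarrow> g u) (at_right 0)"
proof (rule tendstoI)
  fix e :: real assume "e > 0"
  have "u \<in> {u..b}" using \<open>u < b\<close> by simp
  then obtain d where d: "d > 0" "\<forall>r\<in>{u..b}. dist r u < d \<longrightarrow> dist (g r) (g u) < e / 2"
    using g \<open>e > 0\<close> unfolding continuous_on_iff by (metis half_gt_zero)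
  have "dist (integral {u..u + h} g /\<^sub>R h) (g u) < e" if h: "0 < h" "h < min d (b - u)" for h
  proof -
    have cont: "continuous_on {u..u + h} g"
      using h by (intro continuous_on_subset[OF g]) auto
    have "integral {u..u + h} (\<lambda>r. g r - g u) = integral {u..u + h} g - h *\<^sub>R g u"
      using integral_diff[OF integrable_continuous_interval[OF cont] integrable_const_ivl] h by simp
    then have "integral {u..u + h} g /\<^sub>R h - g u = integral {u..u + h} (\<lambda>r. g r - g u) /\<^sub>R h"
      using h by (simp add: scaleR_diff_right)
    then have "dist (integral {u..u + h} g /\<^sub>R h) (g u) = norm (integral {u..u + h} (\<lambda>r. g r - g u)) / h"
      using h by (simp add: dist_norm divide_inverse mult.commute)
    moreover have "norm (integral {u..u + h} (\<lambda>r. g r - g u)) \<le> e / 2 * (u + h - u)"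
    proof (rule integral_bound)
      fix r assume "r \<in> {u..u + h}"
      then have "dist (g r) (g u) < e / 2" using d h by (auto simp: dist_real_def)
      then show "norm (g r - g u) \<le> e / 2" by (simp add: dist_norm)
    qed (use h cont in \<open>simp_all add: continuous_on_diff\<close>)
    ultimately have "dist (integral {u..u + h} g /\<^sub>R h) (g u) \<le> e / 2"
      using h by (simp add: divide_le_eq)
    then show ?thesis using \<open>e > 0\<close> by linarith
  qed
  moreover have "min d (b - u) > 0" using d \<open>u < b\<close> by simp
  ultimately show "\<forall>\<^sub>F h in at_right 0. dist (integral {u..u + h} g /\<^sub>R h) (g u) < e"
    unfolding eventually_at_right_field by blast
qed

section \<open>Strongly continuous semigroups\<close>

locale c0_semigroup =
  fixes S :: "real \<Rightarrow> 'a::banach \<Rightarrow> 'a"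
  assumes C0: "C0_semigroup S"
begin

lemma bounded_linear_S: "0 \<le> t \<Longrightarrow> bounded_linear (S t)"
  using C0 by (simp add: C0_semigroup_def)

lemma S_0_eq_id: "S 0 = id"
  using C0 by (simp add: C0_semigroup_def)

lemma S_0 [simp]: "S 0 x = x"
  by (simp add: S_0_eq_id)

lemma S_semigroup: "0 \<le> s \<Longrightarrow> 0 \<le> t \<Longrightarrow> S (s + t) x = S s (S t x)"
  using C0 by (simp add: C0_semigroup_def)

lemma S_commute: "0 \<le> s \<Longrightarrow> 0 \<le> t \<Longrightarrow> S s (S t x) = S t (S s x)"
  by (metis S_semigroup add.commute)

lemma S_add: "0 \<le> t \<Longrightarrow> S t (x + y) = S t x + S t y"
  using bounded_linear_S linear_add bounded_linear.linear by metis

lemma S_diff: "0 \<le> t \<Longrightarrow> S t (x - y) = S t x - S t y"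
  using bounded_linear_S linear_diff bounded_linear.linear by metis

lemma S_scaleR: "0 \<le> t \<Longrightarrow> S t (c *\<^sub>R x) = c *\<^sub>R S t x"
  using bounded_linear_S linear_scale bounded_linear.linear by metis

lemma norm_S_le: "0 \<le> t \<Longrightarrow> onorm (S t) \<le> K \<Longrightarrow> norm (S t x) \<le> K * norm x"
  by (meson bounded_linear_S mult_right_mono norm_ge_zero onorm order_trans)

lemma tendsto_S_at_right_0: "((\<lambda>t. S t x) \<longlongrightarrow> x) (at_right 0)"
  using C0 by (simp add: C0_semigroup_def)

lemma continuous_S_at_0: "continuous (at 0 within {0..}) (\<lambda>t. S t x)"
  unfolding continuous_within at_within_Ici_at_right using tendsto_S_at_right_0 by simp

lemma tendsto_S_compose_0:
  assumes "(f \<longlongrightarrow> 0) F" "\<forall>\<^sub>F n in F. 0 \<le> f n"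
  shows "((\<lambda>n. S (f n) x) \<longlongrightarrow> x) F"
proof -
  have "((\<lambda>n. S (f n) x) \<longlongrightarrow> S 0 x) F"
    using assms by (intro continuous_within_tendsto_compose[OF continuous_S_at_0])
      (auto elim: eventually_mono)
  then show ?thesis by simp
qed

lemma bounded_near_0: "\<exists>d>0. \<exists>M. \<forall>t\<in>{0..d}. onorm (S t) \<le> M"
proof (rule ccontr)
  assume "\<not> ?thesis"
  then have unbounded: "\<forall>d>0. \<forall>M. \<exists>t\<in>{0..d}. M < onorm (S t)"
    by (simp add: not_le)
  have "\<exists>t. t \<in> {0..inverse (real (Suc n))} \<and> real n < onorm (S t)" for n
    using unbounded[rule_format, of "inverse (real (Suc n))" "real n"] by auto
  then obtain u where u: "\<And>n. u n \<in> {0..inverse (real (Suc n))}" "\<And>n. real n < onorm (S (u n))"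
    by (metis atLeastAtMost_iff)
  have "u \<longlonglongrightarrow> 0"
    by (rule tendsto_sandwich[OF _ _ tendsto_const LIMSEQ_inverse_real_of_nat]) (use u in auto)
  then have "convergent (\<lambda>n. S (u n) x)" for x
    using tendsto_S_compose_0[of u sequentially x] u(1) by (auto simp: convergent_def)
  then have "Bseq (\<lambda>n. S (u n) x)" for x
    by (rule convergent_imp_Bseq)
  then have "\<exists>B. \<forall>n. norm (S (u n) x) \<le> B" for x
    by (auto simp: Bseq_def)
  moreover have "bounded_linear (S (u n))" for n
    using u(1)[of n] by (simp add: bounded_linear_S)
  ultimately obtain M where M: "\<forall>n. onorm (S (u n)) \<le> M"
    using uniform_boundedness_principle[of "\<lambda>n. S (u n)"] by blast
  obtain n :: nat where "M < real n" using reals_Archimedean2 by blast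
  then show False using u(2)[of n] M[rule_format, of n] by linarith
qed

lemma locally_bounded: "\<exists>K\<ge>1. \<forall>t\<in>{0..T}. onorm (S t) \<le> K"
proof -
  obtain d M where d: "d > 0" and M: "\<forall>t\<in>{0..d}. onorm (S t) \<le> M"
    using bounded_near_0 by blast
  define K where "K = max 1 M"
  have K: "K \<ge> 1" "\<forall>t\<in>{0..d}. onorm (S t) \<le> K"
    using M by (auto simp: K_def intro: le_max_iff_disj[THEN iffD2])
  have "\<forall>t\<in>{0..real k * d}. onorm (S t) \<le> K ^ (k + 1)" for k
  proof (induction k)
    case 0
    then show ?case using order_trans[OF onorm_id_le K(1)] by (simp add: S_0_eq_id)
  next
    case (Suc k)
    show ?case
    proof
      fix t assume t: "t \<in> {0..real (Suc k) * d}"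
      show "onorm (S t) \<le> K ^ (Suc k + 1)"
      proof (cases "t \<le> d")
        case True
        then have "onorm (S t) \<le> K" using K t by simp
        also have "K \<le> K ^ (Suc k + 1)" using K(1) power_increasing[of 1 "Suc k + 1" K] by simp
        finally show ?thesis .
      next
        case False
        have "S t = S (t - d) \<circ> S d"
          using S_semigroup[of "t - d" d] False d by fastforce
        then have "onorm (S t) \<le> onorm (S (t - d)) * onorm (S d)"
          using False d by (simp add: onorm_compose bounded_linear_S)
        also have "\<dots> \<le> K ^ (k + 1) * K"
          using Suc.IH False t K d by (intro mult_mono onorm_pos_le bounded_linear_S)
            (auto simp: algebra_simps)
        finally show ?thesis by (simp add: mult.commute)
      qed
    qed
  qed
  moreover obtain k :: nat where "T < real k * d" using ex_less_of_nat_mult[OF d] by blast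
  ultimately have "\<forall>t\<in>{0..T}. onorm (S t) \<le> K ^ (k + 1)" by fastforce
  then show ?thesis using K(1) one_le_power by blast
qed

lemma norm_S_diff_le:
  assumes "0 \<le> a" "a \<le> b" "onorm (S a) \<le> K"
  shows "norm (S b x - S a x) \<le> K * norm (S (b - a) x - x)"
proof -
  have "S b x - S a x = S a (S (b - a) x - x)"
    using S_semigroup[of a "b - a" x] S_diff assms by simp
  then show ?thesis using norm_S_le assms by simp
qed

lemma continuous_on_orbit: "continuous_on {0..} (\<lambda>t. S t x)"
  unfolding continuous_on_def
proof (intro ballI)
  fix s :: real assume "s \<in> {0..}"
  then have s: "0 \<le> s" by simp
  obtain K where K: "K \<ge> 1" "\<forall>t\<in>{0..s + 1}. onorm (S t) \<le> K"
    using locally_bounded by blast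
  have "((\<lambda>r. S \<bar>r - s\<bar> x) \<longlongrightarrow> x) (at s within {0..})"
    by (intro tendsto_S_compose_0 tendsto_eq_intros always_eventually) auto
  then have lim: "((\<lambda>r. K * norm (S \<bar>r - s\<bar> x - x)) \<longlongrightarrow> 0) (at s within {0..})"
    by (intro tendsto_mult_right_zero tendsto_norm_zero) (simp add: LIM_zero)
  have ev: "\<forall>\<^sub>F r in at s within {0..}. norm (S r x - S s x) \<le> K * norm (S \<bar>r - s\<bar> x - x)"
    unfolding eventually_at
  proof (intro exI[of _ 1] conjI ballI impI)
    fix r :: real assume "r \<in> {0..}" "r \<noteq> s \<and> dist r s < 1"
    then have r: "0 \<le> r" "r \<le> s + 1" by (auto simp: dist_real_def)
    show "norm (S r x - S s x) \<le> K * norm (S \<bar>r - s\<bar> x - x)"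
    proof (cases "s \<le> r")
      case True
      then show ?thesis using norm_S_diff_le[of s r K x] K s by simp
    next
      case False
      then show ?thesis using norm_S_diff_le[of r s K x] K r
        by (simp add: norm_minus_commute)
    qed
  qed simp
  have "((\<lambda>r. S r x - S s x) \<longlongrightarrow> 0) (at s within {0..})"
    by (rule Lim_null_comparison[OF ev lim])
  then show "((\<lambda>r. S r x) \<longlongrightarrow> S s x) (at s within {0..})"
    by (simp add: LIM_zero_iff)
qed

lemma integrable_orbit: "(\<lambda>t. S t x) integrable_on {0..T}"
  by (rule integrable_continuous_interval, rule continuous_on_subset[OF continuous_on_orbit]) auto

lemma integral_orbit_average:
  "0 \<le> t \<Longrightarrow> ((\<lambda>h. integral {t..t + h} (\<lambda>r. S r x) /\<^sub>R h) \<longlongrightarrow> S t x) (at_right 0)"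
  by (rule tendsto_integral_average_right[where b = "t + 1"])
    (auto intro: continuous_on_subset[OF continuous_on_orbit])

definition orbit_integral :: "real \<Rightarrow> 'a \<Rightarrow> 'a" where
  "orbit_integral t x = integral {0..t} (\<lambda>r. S r x)"

lemma Xop_eq_orbit_integral: "Xop S B \<tau> v = orbit_integral \<tau> (B v)"
  by (simp add: Xop_def orbit_integral_def)

lemma norm_orbit_integral_le:
  assumes "0 \<le> t" "\<forall>r\<in>{0..t}. onorm (S r) \<le> K"
  shows "norm (orbit_integral t x) \<le> t * K * norm x"
proof -
  have "norm (orbit_integral t x) \<le> K * norm x * (t - 0)"
    unfolding orbit_integral_def using assms
    by (intro integral_bound continuous_on_subset[OF continuous_on_orbit] norm_S_le) auto
  then show ?thesis by (simp add: mult_ac)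
qed

lemma bounded_linear_orbit_integral:
  assumes "0 \<le> t"
  shows "bounded_linear (orbit_integral t)"
proof -
  obtain K where K: "K \<ge> 1" "\<forall>r\<in>{0..t}. onorm (S r) \<le> K"
    using locally_bounded by blast
  show ?thesis
  proof (rule bounded_linear_intro[where K = "t * K"])
    show "orbit_integral t (x + y) = orbit_integral t x + orbit_integral t y" for x y
    proof -
      have "orbit_integral t (x + y) = integral {0..t} (\<lambda>r. S r x + S r y)"
        unfolding orbit_integral_def by (rule integral_cong) (simp add: S_add)
      then show ?thesis
        unfolding orbit_integral_def by (simp add: integral_add integrable_orbit)
    qed
    show "orbit_integral t (c *\<^sub>R x) = c *\<^sub>R orbit_integral t x" for c x
    proof -
      have "orbit_integral t (c *\<^sub>R x) = integral {0..t} (\<lambda>r. c *\<^sub>R S r x)"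
        unfolding orbit_integral_def by (rule integral_cong) (simp add: S_scaleR)
      then show ?thesis by (simp add: orbit_integral_def)
    qed
    show "norm (orbit_integral t x) \<le> norm x * (t * K)" for x
      using norm_orbit_integral_le[OF assms K(2)] by (simp add: mult_ac)
  qed
qed

lemma S_orbit_integral_commute:
  assumes "0 \<le> h"
  shows "S h (orbit_integral t x) = orbit_integral t (S h x)"
proof -
  have "S h (orbit_integral t x) = integral {0..t} (S h \<circ> (\<lambda>r. S r x))"
    unfolding orbit_integral_def by (rule integral_linear[symmetric, OF integrable_orbit bounded_linear_S[OF assms]])
  also have "\<dots> = orbit_integral t (S h x)"
    unfolding orbit_integral_def using assms by (intro integral_cong) (auto simp: S_commute)
  finally show ?thesis .
qed

lemma S_orbit_integral_minus:
  assumes h: "0 \<le> h" and t: "0 \<le> t"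
  shows "S h (orbit_integral t x) - orbit_integral t x
    = integral {t..t + h} (\<lambda>r. S r x) - integral {0..h} (\<lambda>r. S r x)"
proof -
  have "S h (orbit_integral t x) = integral {0..t} (\<lambda>r. S h (S r x))"
    unfolding orbit_integral_def
    using integral_linear[OF integrable_orbit bounded_linear_S[OF h], symmetric] by (simp add: o_def)
  also have "\<dots> = integral {0..t} ((\<lambda>r. S r x) \<circ> (+) h)"
    by (rule integral_cong) (use h in \<open>simp add: S_semigroup\<close>)
  also have "\<dots> = integral {h..t + h} (\<lambda>r. S r x)"
    using integral_shift_Icc_real[of 0 t "\<lambda>r. S r x" h] by (simp add: add.commute)
  finally have "S h (orbit_integral t x) = integral {h..t + h} (\<lambda>r. S r x)" .
  moreover have "integral {0..h} (\<lambda>r. S r x) + integral {h..t + h} (\<lambda>r. S r x)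
      = integral {0..t + h} (\<lambda>r. S r x)"
    "orbit_integral t x + integral {t..t + h} (\<lambda>r. S r x) = integral {0..t + h} (\<lambda>r. S r x)"
    unfolding orbit_integral_def using h t
    by (intro Henstock_Kurzweil_Integration.integral_combine integrable_orbit; simp)+
  ultimately show ?thesis by (simp add: algebra_simps)
qed

lemma tendsto_orbit_integral_quotient:
  assumes t: "0 \<le> t"
  shows "((\<lambda>h. (S h (orbit_integral t x) - orbit_integral t x) /\<^sub>R h) \<longlongrightarrow> S t x - x) (at_right 0)"
proof -
  have "((\<lambda>h. integral {t..t + h} (\<lambda>r. S r x) /\<^sub>R h - integral {0..0 + h} (\<lambda>r. S r x) /\<^sub>R h)
      \<longlongrightarrow> S t x - x) (at_right 0)"
    using tendsto_diff[OF integral_orbit_average[OF t] integral_orbit_average[of 0]] by simp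
  moreover have "\<forall>\<^sub>F h in at_right 0.
      integral {t..t + h} (\<lambda>r. S r x) /\<^sub>R h - integral {0..0 + h} (\<lambda>r. S r x) /\<^sub>R h
      = (S h (orbit_integral t x) - orbit_integral t x) /\<^sub>R h"
    using eventually_at_right_less
    by eventually_elim (simp add: S_orbit_integral_minus t scaleR_diff_right)
  ultimately show ?thesis by (rule Lim_transform_eventually)
qed

lemma gen_tendsto:
  "x \<in> gen_dom S \<Longrightarrow> ((\<lambda>h. (S h x - x) /\<^sub>R h) \<longlongrightarrow> gen S x) (at_right 0)"
  unfolding gen_dom_def gen_def using tendsto_Lim[OF trivial_limit_at_right_real] by blast

lemma gen_domI: "((\<lambda>h. (S h x - x) /\<^sub>R h) \<longlongrightarrow> y) (at_right 0) \<Longrightarrow> x \<in> gen_dom S"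
  unfolding gen_dom_def by blast

lemma gen_eqI: "((\<lambda>h. (S h x - x) /\<^sub>R h) \<longlongrightarrow> y) (at_right 0) \<Longrightarrow> gen S x = y"
  unfolding gen_def by (rule tendsto_Lim[OF trivial_limit_at_right_real])

lemma orbit_integral_in_gen_dom: "0 \<le> t \<Longrightarrow> orbit_integral t x \<in> gen_dom S"
  by (rule gen_domI[OF tendsto_orbit_integral_quotient])

lemma S_in_gen_dom:
  assumes x: "x \<in> gen_dom S" and t: "0 \<le> t"
  shows "S t x \<in> gen_dom S" and "gen S (S t x) = S t (gen S x)"
proof -
  have "((\<lambda>h. S t ((S h x - x) /\<^sub>R h)) \<longlongrightarrow> S t (gen S x)) (at_right 0)"
    by (rule bounded_linear.tendsto[OF bounded_linear_S[OF t] gen_tendsto[OF x]])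
  moreover have "\<forall>\<^sub>F h in at_right 0. S t ((S h x - x) /\<^sub>R h) = (S h (S t x) - S t x) /\<^sub>R h"
    using eventually_at_right_less
    by eventually_elim (use t in \<open>simp add: S_scaleR S_diff S_commute\<close>)
  ultimately have lim: "((\<lambda>h. (S h (S t x) - S t x) /\<^sub>R h) \<longlongrightarrow> S t (gen S x)) (at_right 0)"
    by (rule Lim_transform_eventually)
  show "S t x \<in> gen_dom S" by (rule gen_domI[OF lim])
  show "gen S (S t x) = S t (gen S x)" by (rule gen_eqI[OF lim])
qed

lemma S_minus_id_eq_orbit_integral_gen:
  assumes x: "x \<in> gen_dom S" and t: "0 \<le> t"
  shows "S t x - x = orbit_integral t (gen S x)"
proof -
  have "((\<lambda>h. orbit_integral t ((S h x - x) /\<^sub>R h)) \<longlongrightarrow> orbit_integral t (gen S x)) (at_right 0)"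
    by (rule bounded_linear.tendsto[OF bounded_linear_orbit_integral[OF t] gen_tendsto[OF x]])
  moreover have "\<forall>\<^sub>F h in at_right 0.
      orbit_integral t ((S h x - x) /\<^sub>R h) = (S h (orbit_integral t x) - orbit_integral t x) /\<^sub>R h"
    using eventually_at_right_less
    by eventually_elim (simp add: S_orbit_integral_commute
        linear_scale[OF bounded_linear.linear[OF bounded_linear_orbit_integral[OF t]]]
        linear_diff[OF bounded_linear.linear[OF bounded_linear_orbit_integral[OF t]]])
  ultimately have "((\<lambda>h. (S h (orbit_integral t x) - orbit_integral t x) /\<^sub>R h)
      \<longlongrightarrow> orbit_integral t (gen S x)) (at_right 0)"
    by (rule Lim_transform_eventually)
  then show ?thesis
    using tendsto_orbit_integral_quotient[OF t] tendsto_unique[OF trivial_limit_at_right_real] by blast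
qed

lemma closure_gen_dom: "closure (gen_dom S) = UNIV"
proof -
  have "x \<in> closure (gen_dom S)" for x
  proof (rule Lim_in_closed_set[OF closed_closure])
    have "((\<lambda>h. integral {0..0 + h} (\<lambda>r. S r x) /\<^sub>R h) \<longlongrightarrow> x) (at_right 0)"
      using integral_orbit_average[of 0 x] by simp
    moreover have "\<forall>\<^sub>F h in at_right 0. integral {0..0 + h} (\<lambda>r. S r x) /\<^sub>R h = orbit_integral h (x /\<^sub>R h)"
    proof (rule eventually_mono[OF eventually_at_right_less])
      fix h :: real assume "0 < h"
      then have "orbit_integral h (x /\<^sub>R h) = orbit_integral h x /\<^sub>R h"
        by (simp add: linear_scale[OF bounded_linear.linear[OF bounded_linear_orbit_integral]])
      then show "integral {0..0 + h} (\<lambda>r. S r x) /\<^sub>R h = orbit_integral h (x /\<^sub>R h)"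
        by (simp add: orbit_integral_def)
    qed
    ultimately show "((\<lambda>h. orbit_integral h (x /\<^sub>R h)) \<longlongrightarrow> x) (at_right 0)"
      by (rule Lim_transform_eventually)
    show "\<forall>\<^sub>F h in at_right 0. orbit_integral h (x /\<^sub>R h) \<in> closure (gen_dom S)"
    proof (rule eventually_mono[OF eventually_at_right_less])
      fix h :: real assume "0 < h"
      then have "orbit_integral h (x /\<^sub>R h) \<in> gen_dom S" by (simp add: orbit_integral_in_gen_dom)
      then show "orbit_integral h (x /\<^sub>R h) \<in> closure (gen_dom S)" using closure_subset by blast
    qed
  qed simp
  then show ?thesis by blast
qed

lemma continuous_on_S_curve:
  fixes T R :: real
  assumes f: "continuous_on {0..T} f"
  shows "continuous_on ({0..R} \<times> {0..T}) (\<lambda>q. S (fst q) (f (snd q)))"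
  unfolding continuous_on_def
proof
  fix p assume p: "p \<in> {0..R} \<times> {0..T}"
  define A where "A = {0..R} \<times> {0..T}"
  have pA: "p \<in> A" using p by (simp add: A_def)
  obtain K where K: "K \<ge> 1" "\<forall>t\<in>{0..R}. onorm (S t) \<le> K"
    using locally_bounded by blast
  have "continuous_on A (\<lambda>q. f (snd q))"
    unfolding A_def by (rule continuous_on_compose2[OF f continuous_on_snd]) auto
  then have "((\<lambda>q. f (snd q)) \<longlongrightarrow> f (snd p)) (at p within A)"
    using pA by (simp add: continuous_on_def)
  then have lim: "((\<lambda>q. K * norm (f (snd q) - f (snd p))) \<longlongrightarrow> 0) (at p within A)"
    by (intro tendsto_mult_right_zero tendsto_norm_zero) (simp add: LIM_zero)
  have ev: "\<forall>\<^sub>F q in at p within A.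
      norm (S (fst q) (f (snd q)) - S (fst q) (f (snd p))) \<le> K * norm (f (snd q) - f (snd p))"
    unfolding eventually_at_filter
    by (rule always_eventually) (auto simp: A_def K S_diff[symmetric] intro!: norm_S_le)
  have "continuous_on A (\<lambda>q. S (fst q) (f (snd p)))"
    unfolding A_def by (rule continuous_on_compose2[OF continuous_on_orbit continuous_on_fst]) auto
  then have "((\<lambda>q. S (fst q) (f (snd p))) \<longlongrightarrow> S (fst p) (f (snd p))) (at p within A)"
    using pA by (simp add: continuous_on_def)
  from tendsto_add[OF Lim_null_comparison[OF ev lim] this]
  show "((\<lambda>q. S (fst q) (f (snd q))) \<longlongrightarrow> S (fst p) (f (snd p))) (at p within {0..R} \<times> {0..T})"
    by (simp add: A_def)
qed

lemma uniformly_close_to_id_on_curve: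
  fixes T :: real
  assumes f: "continuous_on {0..T} f" and e: "e > 0"
  shows "\<exists>d>0. \<forall>r\<in>{0..d}. \<forall>s\<in>{0..T}. norm (S r (f s) - f s) \<le> e"
proof -
  have "uniformly_continuous_on ({0..1} \<times> {0..T}) (\<lambda>q. S (fst q) (f (snd q)))"
    by (intro compact_uniformly_continuous continuous_on_S_curve f compact_Times compact_Icc)
  then obtain d where d: "d > 0" and uc: "\<forall>q\<in>{0..1} \<times> {0..T}. \<forall>q'\<in>{0..1} \<times> {0..T}.
      dist q' q < d \<longrightarrow> dist (S (fst q') (f (snd q'))) (S (fst q) (f (snd q))) < e"
    using e unfolding uniformly_continuous_on_def by blast
  have "norm (S r (f s) - f s) \<le> e" if "r \<in> {0..min (d / 2) 1}" "s \<in> {0..T}" for r s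
  proof -
    have "dist (r, s) (0, s) < d" using that d by (simp add: dist_Pair_Pair dist_real_def)
    then have "dist (S r (f s)) (S 0 (f s)) < e"
      using uc[rule_format, of "(0, s)" "(r, s)"] that by simp
    then show ?thesis by (simp add: dist_norm)
  qed
  moreover have "min (d / 2) 1 > 0" using d by simp
  ultimately show ?thesis by blast
qed

lemma norm_S_minus_funpow_le:
  assumes T: "linear T" and L: "\<And>v. norm (T v) \<le> L * norm v" "1 \<le> L"
    and \<tau>: "0 \<le> \<tau>" and \<rho>: "0 \<le> \<rho>"
    and consistent: "\<And>k. k < n \<Longrightarrow> norm (S \<tau> (S (real k * \<tau>) x) - T (S (real k * \<tau>) x)) \<le> \<rho>"
  shows "norm (S (real n * \<tau>) x - (T ^^ n) x) \<le> real n * L ^ n * \<rho>"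
proof -
  have "norm (S (real m * \<tau>) x - (T ^^ m) x) \<le> real m * L ^ m * \<rho>" if "m \<le> n" for m
    using that
  proof (induction m)
    case 0
    then show ?case by simp
  next
    case (Suc m)
    define y where "y = S (real m * \<tau>) x"
    have "S (real (Suc m) * \<tau>) x - (T ^^ Suc m) x = (S \<tau> y - T y) + T (y - (T ^^ m) x)"
      using S_semigroup[of \<tau> "real m * \<tau>" x] \<tau> linear_diff[OF T]
      by (simp add: y_def algebra_simps)
    then have "norm (S (real (Suc m) * \<tau>) x - (T ^^ Suc m) x) \<le> norm (S \<tau> y - T y) + norm (T (y - (T ^^ m) x))"
      by (simp add: norm_triangle_ineq)
    also have "\<dots> \<le> \<rho> + L * (real m * L ^ m * \<rho>)"
    proof (rule add_mono)
      show "norm (S \<tau> y - T y) \<le> \<rho>" using Suc.prems consistent[of m] by (simp add: y_def)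
      have "L * norm (y - (T ^^ m) x) \<le> L * (real m * L ^ m * \<rho>)"
        using Suc L(2) by (intro mult_left_mono) (auto simp: y_def)
      then show "norm (T (y - (T ^^ m) x)) \<le> L * (real m * L ^ m * \<rho>)"
        using L(1) order_trans by blast
    qed
    also have "\<dots> \<le> real (Suc m) * L ^ Suc m * \<rho>"
      using mult_right_mono[OF one_le_power[OF L(2), of "Suc m"] \<rho>] by (simp add: algebra_simps)
    finally show ?case .
  qed
  then show ?thesis by simp
qed

end

section \<open>Stability of the split step\<close>

lemma contraction_semigroupD:
  assumes "contraction_semigroup E"
  shows "c0_semigroup E" and "0 \<le> t \<Longrightarrow> norm (E t x) \<le> norm x"
proof -
  show E: "c0_semigroup E"
    using assms by (simp add: contraction_semigroup_def c0_semigroup_def)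
  show "norm (E t x) \<le> norm x" if "0 \<le> t"
    using c0_semigroup.norm_S_le[OF E that, of 1] assms that by (simp add: contraction_semigroup_def)
qed

lemma bounded_linear_Xop:
  assumes "c0_semigroup E" "bounded_linear B" "0 \<le> \<tau>"
  shows "bounded_linear (Xop E B \<tau>)"
  unfolding c0_semigroup.Xop_eq_orbit_integral[OF assms(1)]
  using bounded_linear_compose[OF c0_semigroup.bounded_linear_orbit_integral[OF assms(1,3)] assms(2)] .

lemma norm_Xop_le:
  assumes E: "contraction_semigroup E" and B: "bounded_linear B" and \<tau>: "0 \<le> \<tau>"
  shows "norm (Xop E B \<tau> v) \<le> \<tau> * onorm B * norm v"
proof -
  have "norm (Xop E B \<tau> v) \<le> \<tau> * 1 * norm (B v)"
    unfolding c0_semigroup.Xop_eq_orbit_integral[OF contraction_semigroupD(1)[OF E]] using E \<tau>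
    by (intro c0_semigroup.norm_orbit_integral_le contraction_semigroupD) (auto simp: contraction_semigroup_def)
  also have "\<dots> \<le> \<tau> * onorm B * norm v"
    using onorm[OF B, of v] \<tau> by (simp add: mult_left_mono mult.assoc)
  finally show ?thesis .
qed


lemma sqrt_shear_le:
  fixes a p q c :: real
  assumes "0 \<le> a" "a \<le> p + c * q" "0 \<le> p" "0 \<le> q" "0 \<le> c"
  shows "sqrt (a\<^sup>2 + q\<^sup>2) \<le> (1 + c) * sqrt (p\<^sup>2 + q\<^sup>2)"
proof -
  have "a\<^sup>2 \<le> (p + c * q)\<^sup>2" using assms by (intro power_mono) auto
  moreover have "(1 + c)\<^sup>2 * (p\<^sup>2 + q\<^sup>2) - ((p + c * q)\<^sup>2 + q\<^sup>2) = 2 * c * ((p - q)\<^sup>2 + p * q) + c\<^sup>2 * p\<^sup>2"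
    by (simp add: power2_eq_square algebra_simps)
  moreover have "0 \<le> 2 * c * ((p - q)\<^sup>2 + p * q) + c\<^sup>2 * p\<^sup>2" using assms by simp
  ultimately have "a\<^sup>2 + q\<^sup>2 \<le> (1 + c)\<^sup>2 * (p\<^sup>2 + q\<^sup>2)" by linarith
  then have "sqrt (a\<^sup>2 + q\<^sup>2) \<le> sqrt ((1 + c)\<^sup>2 * (p\<^sup>2 + q\<^sup>2))" by (rule real_sqrt_le_mono)
  then show ?thesis using assms by (simp add: real_sqrt_mult)
qed

lemma norm_swap: "norm (prod.swap p) = norm p"
  by (simp add: norm_prod_def add.commute)

lemma split_T2_eq_swap_split_T1:
  "split_T2 E2 B2 \<tau> p = prod.swap (split_T1 E2 B2 \<tau> (prod.swap p))"
  by (simp add: split_T1_def split_T2_def add.commute)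

lemma bounded_linear_split_T1:
  assumes "c0_semigroup E1" "bounded_linear B1" "0 \<le> \<tau>"
  shows "bounded_linear (split_T1 E1 B1 \<tau>)"
  unfolding split_T1_def
  by (intro bounded_linear_Pair bounded_linear_add bounded_linear_snd
      bounded_linear_compose[OF c0_semigroup.bounded_linear_S[OF assms(1,3)] bounded_linear_fst]
      bounded_linear_compose[OF bounded_linear_Xop[OF assms] bounded_linear_snd])

lemma bounded_linear_split_T2:
  assumes "c0_semigroup E2" "bounded_linear B2" "0 \<le> \<tau>"
  shows "bounded_linear (split_T2 E2 B2 \<tau>)"
  unfolding split_T2_def
  by (intro bounded_linear_Pair bounded_linear_add bounded_linear_fst
      bounded_linear_compose[OF c0_semigroup.bounded_linear_S[OF assms(1,3)] bounded_linear_snd]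
      bounded_linear_compose[OF bounded_linear_Xop[OF assms] bounded_linear_fst])

lemma norm_split_T1_le:
  assumes E1: "contraction_semigroup E1" and B1: "bounded_linear B1" and \<tau>: "0 \<le> \<tau>"
  shows "norm (split_T1 E1 B1 \<tau> p) \<le> (1 + \<tau> * onorm B1) * norm p"
proof -
  obtain u v where p: "p = (u, v)" by (cases p)
  have "norm (E1 \<tau> u + Xop E1 B1 \<tau> v) \<le> norm u + \<tau> * onorm B1 * norm v"
    using norm_triangle_ineq[of "E1 \<tau> u" "Xop E1 B1 \<tau> v"]
      contraction_semigroupD(2)[OF E1 \<tau>, of u] norm_Xop_le[OF E1 B1 \<tau>, of v] by linarith
  then have "sqrt ((norm (E1 \<tau> u + Xop E1 B1 \<tau> v))\<^sup>2 + (norm v)\<^sup>2)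
      \<le> (1 + \<tau> * onorm B1) * sqrt ((norm u)\<^sup>2 + (norm v)\<^sup>2)"
    using \<tau> onorm_pos_le[OF B1] by (intro sqrt_shear_le) (auto simp: mult_ac)
  then show ?thesis by (simp add: p split_T1_def norm_Pair)
qed

lemma norm_split_T2_le:
  assumes "contraction_semigroup E2" "bounded_linear B2" "0 \<le> \<tau>"
  shows "norm (split_T2 E2 B2 \<tau> p) \<le> (1 + \<tau> * onorm B2) * norm p"
  using norm_split_T1_le[OF assms, of "prod.swap p"]
  by (simp add: split_T2_eq_swap_split_T1 norm_swap)

lemma bounded_linear_split_T:
  assumes "contraction_semigroup E1" "contraction_semigroup E2"
    and "bounded_linear B1" "bounded_linear B2" "0 \<le> \<tau>"
  shows "bounded_linear (split_T E1 E2 B1 B2 \<tau>)"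
  unfolding split_T_def using assms
  by (intro bounded_linear_compose[unfolded o_def[symmetric]] bounded_linear_split_T1
      bounded_linear_split_T2 contraction_semigroupD)

lemma norm_split_T_le:
  assumes E1: "contraction_semigroup E1" and E2: "contraction_semigroup E2"
    and B1: "bounded_linear B1" and B2: "bounded_linear B2" and \<tau>: "0 \<le> \<tau>"
  shows "norm (split_T E1 E2 B1 B2 \<tau> p) \<le> exp (\<tau> * (onorm B1 + onorm B2)) * norm p"
proof -
  have b1: "0 \<le> \<tau> * onorm B1" and b2: "0 \<le> \<tau> * onorm B2"
    using \<tau> onorm_pos_le[OF B1] onorm_pos_le[OF B2] by auto
  have "norm (split_T E1 E2 B1 B2 \<tau> p) \<le> (1 + \<tau> * onorm B2) * norm (split_T1 E1 B1 \<tau> p)"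
    unfolding split_T_def using norm_split_T2_le[OF E2 B2 \<tau>] by simp
  also have "\<dots> \<le> (1 + \<tau> * onorm B2) * ((1 + \<tau> * onorm B1) * norm p)"
    using norm_split_T1_le[OF E1 B1 \<tau>] b2 by (intro mult_left_mono) auto
  also have "\<dots> \<le> (exp (\<tau> * onorm B2) * exp (\<tau> * onorm B1)) * norm p"
    unfolding mult.assoc[symmetric] using b1 b2
    by (intro mult_right_mono mult_mono exp_ge_add_one_self) auto
  also have "\<dots> = exp (\<tau> * (onorm B1 + onorm B2)) * norm p"
    by (simp add: exp_add[symmetric] algebra_simps)
  finally show ?thesis .
qed

lemma bounded_linear_funpow:
  fixes f :: "'a::real_normed_vector \<Rightarrow> 'a"
  assumes "bounded_linear f"
  shows "bounded_linear (f ^^ n)"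
proof (induction n)
  case 0
  then show ?case by (simp add: id_def bounded_linear_ident)
next
  case (Suc n)
  then show ?case using bounded_linear_compose[OF assms Suc] by (simp add: o_def)
qed

lemma onorm_funpow_le:
  fixes f :: "'a::real_normed_vector \<Rightarrow> 'a"
  assumes "bounded_linear f"
  shows "onorm (f ^^ n) \<le> onorm f ^ n"
proof (induction n)
  case 0
  have "f ^^ 0 = id" by simp
  then show ?case using onorm_id_le by simp
next
  case (Suc n)
  have "onorm (f ^^ Suc n) \<le> onorm f * onorm (f ^^ n)"
    using assms bounded_linear_funpow[OF assms] by (simp add: onorm_compose)
  also have "\<dots> \<le> onorm f * onorm f ^ n"
    using Suc assms by (intro mult_left_mono onorm_pos_le)
  finally show ?case by (simp add: o_def)
qed

lemma onorm_split_T_power_le: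
  assumes "contraction_semigroup E1" "contraction_semigroup E2"
    and B1: "bounded_linear B1" and B2: "bounded_linear B2" and t: "0 \<le> t"
  shows "onorm (split_T E1 E2 B1 B2 (t / real n) ^^ n) \<le> exp (t * (onorm B1 + onorm B2))"
proof -
  define b where "b = onorm B1 + onorm B2"
  have b: "0 \<le> b" using onorm_pos_le[OF B1] onorm_pos_le[OF B2] by (simp add: b_def)
  have \<tau>: "0 \<le> t / real n" using t by simp
  have "onorm (split_T E1 E2 B1 B2 (t / real n) ^^ n) \<le> onorm (split_T E1 E2 B1 B2 (t / real n)) ^ n"
    by (intro onorm_funpow_le bounded_linear_split_T assms \<tau>)
  also have "\<dots> \<le> exp (t / real n * b) ^ n"
    using norm_split_T_le[OF assms(1-4) \<tau>] unfolding b_def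
    by (intro power_mono onorm_bound onorm_pos_le bounded_linear_split_T assms \<tau>) auto
  also have "\<dots> = exp (real n * (t / real n) * b)"
    by (simp add: exp_of_nat_mult[symmetric] mult.assoc)
  also have "\<dots> \<le> exp (t * b)"
    using t b by (cases "n = 0") (auto intro: mult_nonneg_nonneg)
  finally show ?thesis by (simp add: b_def)
qed

section \<open>Consistency and convergence\<close>

definition decoupled ::
  "(real \<Rightarrow> 'a::banach \<Rightarrow> 'a) \<Rightarrow> (real \<Rightarrow> 'b::banach \<Rightarrow> 'b) \<Rightarrow> real \<Rightarrow> 'a \<times> 'b \<Rightarrow> 'a \<times> 'b" where
  "decoupled E1 E2 t p = (E1 t (fst p), E2 t (snd p))"

lemma C0_semigroup_decoupled:
  assumes "C0_semigroup E1" "C0_semigroup E2"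
  shows "C0_semigroup (decoupled E1 E2)"
proof -
  interpret S1: c0_semigroup E1 by (rule c0_semigroup.intro) (rule assms(1))
  interpret S2: c0_semigroup E2 by (rule c0_semigroup.intro) (rule assms(2))
  have "bounded_linear (decoupled E1 E2 t)" if "0 \<le> t" for t
    unfolding decoupled_def using that
    by (intro bounded_linear_Pair bounded_linear_compose[OF S1.bounded_linear_S bounded_linear_fst]
        bounded_linear_compose[OF S2.bounded_linear_S bounded_linear_snd])
  moreover have "decoupled E1 E2 0 = id"
    by (simp add: decoupled_def fun_eq_iff)
  moreover have "decoupled E1 E2 (s + t) = decoupled E1 E2 s \<circ> decoupled E1 E2 t" if "0 \<le> s" "0 \<le> t" for s t
    using that by (simp add: decoupled_def fun_eq_iff S1.S_semigroup S2.S_semigroup)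
  moreover have "((\<lambda>t. decoupled E1 E2 t p) \<longlongrightarrow> p) (at_right 0)" for p
    using tendsto_Pair[OF S1.tendsto_S_at_right_0[of "fst p"] S2.tendsto_S_at_right_0[of "snd p"]]
    by (simp add: decoupled_def)
  ultimately show ?thesis unfolding C0_semigroup_def by blast
qed

locale split_step =
  fixes E1 :: "real \<Rightarrow> 'a::banach \<Rightarrow> 'a" and E2 :: "real \<Rightarrow> 'b::banach \<Rightarrow> 'b"
    and B1 :: "'b \<Rightarrow> 'a" and B2 :: "'a \<Rightarrow> 'b" and U :: "real \<Rightarrow> 'a \<times> 'b \<Rightarrow> 'a \<times> 'b"
  assumes E1: "contraction_semigroup E1" and E2: "contraction_semigroup E2"
    and B1: "bounded_linear B1" and B2: "bounded_linear B2"
    and U_sg: "C0_semigroup U"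
    and U_dom: "gen_dom U = gen_dom E1 \<times> gen_dom E2"
    and U_gen: "\<And>u v. u \<in> gen_dom E1 \<Longrightarrow> v \<in> gen_dom E2 \<Longrightarrow>
                  gen U (u, v) = (gen E1 u + B1 v, B2 u + gen E2 v)"
begin

abbreviation step :: "real \<Rightarrow> 'a \<times> 'b \<Rightarrow> 'a \<times> 'b" where
  "step \<equiv> split_T E1 E2 B1 B2"

sublocale U: c0_semigroup U
  by (rule c0_semigroup.intro[OF U_sg])

sublocale S1: c0_semigroup E1
  by (rule contraction_semigroupD(1)[OF E1])

sublocale S2: c0_semigroup E2
  by (rule contraction_semigroupD(1)[OF E2])

sublocale D: c0_semigroup "decoupled E1 E2"
  using E1 E2 by (intro c0_semigroup.intro C0_semigroup_decoupled) (simp_all add: contraction_semigroup_def)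

lemma orbit_integral_decoupled:
  "D.orbit_integral \<tau> w = (S1.orbit_integral \<tau> (fst w), S2.orbit_integral \<tau> (snd w))"
proof -
  have "fst (D.orbit_integral \<tau> w) = S1.orbit_integral \<tau> (fst w)"
    using integral_linear[OF D.integrable_orbit bounded_linear_fst, symmetric]
    by (simp add: D.orbit_integral_def S1.orbit_integral_def decoupled_def o_def)
  moreover have "snd (D.orbit_integral \<tau> w) = S2.orbit_integral \<tau> (snd w)"
    using integral_linear[OF D.integrable_orbit bounded_linear_snd, symmetric]
    by (simp add: D.orbit_integral_def S2.orbit_integral_def decoupled_def o_def)
  ultimately show ?thesis by (simp add: prod_eq_iff)
qed

(* The remainder arises because T2 applies B2 to the updated first component. *)
lemma step_minus_id:
  assumes z: "z \<in> gen_dom U" and \<tau>: "0 \<le> \<tau>"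
  shows "step \<tau> z - z = D.orbit_integral \<tau> (gen U z) + (0, Xop E2 B2 \<tau> (fst (step \<tau> z) - fst z))"
proof -
  obtain u v where uv: "z = (u, v)" by (cases z)
  have u: "u \<in> gen_dom E1" and v: "v \<in> gen_dom E2" using z U_dom uv by auto
  note lin1 = bounded_linear.linear[OF S1.bounded_linear_orbit_integral[OF \<tau>]]
  note lin2 = bounded_linear.linear[OF S2.bounded_linear_orbit_integral[OF \<tau>]]
  define a where "a = E1 \<tau> u + Xop E1 B1 \<tau> v"
  have step: "step \<tau> (u, v) = (a, Xop E2 B2 \<tau> a + E2 \<tau> v)"
    by (simp add: a_def split_T_def split_T1_def split_T2_def)
  have "a - u = S1.orbit_integral \<tau> (gen E1 u + B1 v)"
    using S1.S_minus_id_eq_orbit_integral_gen[OF u \<tau>]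
    by (simp add: a_def S1.Xop_eq_orbit_integral linear_add[OF lin1] algebra_simps)
  moreover have "Xop E2 B2 \<tau> a + E2 \<tau> v - v
      = S2.orbit_integral \<tau> (B2 u + gen E2 v) + Xop E2 B2 \<tau> (a - u)"
    using S2.S_minus_id_eq_orbit_integral_gen[OF v \<tau>]
    by (simp add: S2.Xop_eq_orbit_integral linear_add[OF lin2] linear_diff[OF lin2]
        linear_diff[OF bounded_linear.linear[OF B2]] algebra_simps)
  ultimately have "step \<tau> z - z
      = (S1.orbit_integral \<tau> (gen E1 u + B1 v), S2.orbit_integral \<tau> (B2 u + gen E2 v) + Xop E2 B2 \<tau> (a - u))"
    by (simp add: uv step)
  then show ?thesis
    by (simp add: uv step orbit_integral_decoupled U_gen[OF u v])
qed

lemma norm_U_minus_step_le: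
  assumes z: "z \<in> gen_dom U" and \<tau>: "0 \<le> \<tau>"
    and U_close: "\<forall>r\<in>{0..\<tau>}. norm (U r (gen U z) - gen U z) \<le> \<eta>"
    and D_close: "\<forall>r\<in>{0..\<tau>}. norm (decoupled E1 E2 r (gen U z) - gen U z) \<le> \<eta>"
    and D_close_z: "norm (decoupled E1 E2 \<tau> z - z) \<le> \<eta>"
  shows "norm (U \<tau> z - step \<tau> z) \<le> \<tau> * (2 * \<eta> + onorm B2 * (\<eta> + \<tau> * onorm B1 * norm (snd z)))"
proof -
  define w where "w = gen U z"
  define d where "d = fst (step \<tau> z) - fst z"
  have "U \<tau> z - step \<tau> z = (U \<tau> z - z) - (step \<tau> z - z)"
    by simp
  also have "\<dots> = integral {0..\<tau>} (\<lambda>r. U r w - decoupled E1 E2 r w) - (0, Xop E2 B2 \<tau> d)"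
    using U.S_minus_id_eq_orbit_integral_gen[OF z \<tau>] step_minus_id[OF z \<tau>]
      integral_diff[OF U.integrable_orbit D.integrable_orbit]
    by (simp add: U.orbit_integral_def D.orbit_integral_def w_def d_def)
  finally have "norm (U \<tau> z - step \<tau> z)
      \<le> norm (integral {0..\<tau>} (\<lambda>r. U r w - decoupled E1 E2 r w)) + norm (Xop E2 B2 \<tau> d)"
    using norm_triangle_ineq4[of _ "(0, Xop E2 B2 \<tau> d)"] by (simp add: norm_Pair)
  also have "norm (integral {0..\<tau>} (\<lambda>r. U r w - decoupled E1 E2 r w)) \<le> 2 * \<eta> * (\<tau> - 0)"
  proof (rule integral_bound)
    show "continuous_on {0..\<tau>} (\<lambda>r. U r w - decoupled E1 E2 r w)"
      by (intro continuous_on_diff continuous_on_subset[OF U.continuous_on_orbit]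
          continuous_on_subset[OF D.continuous_on_orbit]) auto
    fix r assume r: "r \<in> {0..\<tau>}"
    have "norm (U r w - decoupled E1 E2 r w) \<le> norm (U r w - w) + norm (decoupled E1 E2 r w - w)"
      using norm_triangle_ineq4[of "U r w - w" "decoupled E1 E2 r w - w"] by simp
    then show "norm (U r w - decoupled E1 E2 r w) \<le> 2 * \<eta>"
      using U_close D_close r by (fastforce simp: w_def)
  qed (rule \<tau>)
  also have "norm (Xop E2 B2 \<tau> d) \<le> \<tau> * onorm B2 * (\<eta> + \<tau> * onorm B1 * norm (snd z))"
  proof -
    have d: "d = (E1 \<tau> (fst z) - fst z) + Xop E1 B1 \<tau> (snd z)"
      by (simp add: d_def split_T_def split_T1_def split_T2_def)
    have E1_close: "norm (E1 \<tau> (fst z) - fst z) \<le> \<eta>"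
    proof -
      have "norm (fst (decoupled E1 E2 \<tau> z - z)) \<le> norm (decoupled E1 E2 \<tau> z - z)"
        using norm_fst_le[of "fst (decoupled E1 E2 \<tau> z - z)" "snd (decoupled E1 E2 \<tau> z - z)"]
        by (simp only: prod.collapse)
      then show ?thesis using D_close_z by (simp add: decoupled_def)
    qed
    have "norm d \<le> norm (E1 \<tau> (fst z) - fst z) + norm (Xop E1 B1 \<tau> (snd z))"
      unfolding d by (rule norm_triangle_ineq)
    also have "\<dots> \<le> \<eta> + \<tau> * onorm B1 * norm (snd z)"
      using E1_close norm_Xop_le[OF E1 B1 \<tau>] by (rule add_mono)
    finally have "\<tau> * onorm B2 * norm d \<le> \<tau> * onorm B2 * (\<eta> + \<tau> * onorm B1 * norm (snd z))"
      using \<tau> onorm_pos_le[OF B2] by (simp add: mult_left_mono)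
    then show ?thesis using norm_Xop_le[OF E2 B2 \<tau>, of d] by linarith
  qed
  finally show ?thesis by (simp add: algebra_simps)
qed

lemma step_consistent_on_orbit:
  fixes t0 :: real
  assumes x: "x \<in> gen_dom U" and \<epsilon>: "\<epsilon> > 0"
  shows "\<exists>\<delta>>0. \<forall>\<tau>\<in>{0..\<delta>}. \<forall>s\<in>{0..t0}. norm (U \<tau> (U s x) - step \<tau> (U s x)) \<le> \<tau> * \<epsilon>"
proof -
  define b1 where "b1 = onorm B1"
  define b2 where "b2 = onorm B2"
  have b: "0 \<le> b1" "0 \<le> b2" using onorm_pos_le[OF B1] onorm_pos_le[OF B2] by (auto simp: b1_def b2_def)
  obtain K where K: "K \<ge> 1" "\<forall>t\<in>{0..t0}. onorm (U t) \<le> K"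
    using U.locally_bounded by blast
  define C where "C = K * norm x"
  have C: "0 \<le> C" using K by (simp add: C_def)
  have snd_bound: "norm (snd (U s x)) \<le> C" if "s \<in> {0..t0}" for s
    using norm_snd_le[of "snd (U s x)" "fst (U s x)"] U.norm_S_le[of s K x] K that by (auto simp: C_def)
  (* eta and d4 each take half of the error budget in norm_U_minus_step_le *)
  define \<eta> where "\<eta> = \<epsilon> / (4 + 2 * b2)"
  have \<eta>: "\<eta> > 0" "(2 + b2) * \<eta> = \<epsilon> / 2"
    using \<epsilon> b by (simp_all add: \<eta>_def field_simps)
  define y where "y = gen U x"
  have cont: "continuous_on {0..t0} (\<lambda>s. U s v)" for v
    by (rule continuous_on_subset[OF U.continuous_on_orbit]) auto
  obtain dU where dU: "dU > 0" "\<forall>r\<in>{0..dU}. \<forall>s\<in>{0..t0}. norm (U r (U s y) - U s y) \<le> \<eta>"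
    using U.uniformly_close_to_id_on_curve[OF cont \<eta>(1)] by blast
  obtain dD where dD: "dD > 0" "\<forall>r\<in>{0..dD}. \<forall>s\<in>{0..t0}. norm (decoupled E1 E2 r (U s y) - U s y) \<le> \<eta>"
    using D.uniformly_close_to_id_on_curve[OF cont \<eta>(1)] by blast
  obtain dx where dx: "dx > 0" "\<forall>r\<in>{0..dx}. \<forall>s\<in>{0..t0}. norm (decoupled E1 E2 r (U s x) - U s x) \<le> \<eta>"
    using D.uniformly_close_to_id_on_curve[OF cont \<eta>(1)] by blast
  define d4 where "d4 = \<epsilon> / (2 * (b1 * b2 * C + 1))"
  have "0 \<le> b1 * b2 * C" using b C by simp
  then have d4: "d4 > 0" "(b1 * b2 * C + 1) * d4 = \<epsilon> / 2"
    using \<epsilon> by (simp_all add: d4_def field_simps)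
  define \<delta> where "\<delta> = min (min dU dD) (min dx d4)"
  show ?thesis
  proof (intro exI[of _ \<delta>] conjI ballI)
    show "\<delta> > 0" using dU dD dx d4 by (simp add: \<delta>_def)
    fix \<tau> s assume \<tau>: "\<tau> \<in> {0..\<delta>}" and s: "s \<in> {0..t0}"
    have z: "U s x \<in> gen_dom U" and gen_z: "gen U (U s x) = U s y"
      using U.S_in_gen_dom[OF x] s by (auto simp: y_def)
    have "norm (U \<tau> (U s x) - step \<tau> (U s x))
        \<le> \<tau> * (2 * \<eta> + b2 * (\<eta> + \<tau> * b1 * norm (snd (U s x))))"
      unfolding b1_def b2_def
      by (rule norm_U_minus_step_le[OF z]) (use \<tau> s dU dD dx in \<open>auto simp: gen_z \<delta>_def\<close>)
    also have "\<dots> \<le> \<tau> * \<epsilon>"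
    proof (rule mult_left_mono)
      have "\<tau> * norm (snd (U s x)) \<le> d4 * C"
        using \<tau> snd_bound[OF s] C by (intro mult_mono) (auto simp: \<delta>_def)
      then have "b2 * (\<tau> * b1 * norm (snd (U s x))) \<le> b1 * b2 * C * d4"
        using mult_left_mono[of _ _ "b1 * b2"] b by (fastforce simp: mult_ac)
      also have "\<dots> \<le> \<epsilon> / 2" using d4 by (simp add: algebra_simps)
      finally show "2 * \<eta> + b2 * (\<eta> + \<tau> * b1 * norm (snd (U s x))) \<le> \<epsilon>"
        using \<eta>(2) by (simp add: algebra_simps)
    qed (use \<tau> in simp)
    finally show "norm (U \<tau> (U s x) - step \<tau> (U s x)) \<le> \<tau> * \<epsilon>" .
  qed
qed

lemma norm_step_power_le:
  "0 \<le> t \<Longrightarrow> norm ((step (t / real n) ^^ n) v) \<le> exp (t * (onorm B1 + onorm B2)) * norm v"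
  using onorm_split_T_power_le[OF E1 E2 B1 B2, of t n]
    onorm[OF bounded_linear_funpow[OF bounded_linear_split_T[OF E1 E2 B1 B2]], of "t / real n" n v]
  by (meson divide_nonneg_nonneg mult_right_mono norm_ge_zero of_nat_0_le_iff order_trans)

lemma uniform_limit_step_power_on_gen_dom:
  fixes t0 :: real
  assumes x: "x \<in> gen_dom U" and t0: "0 \<le> t0"
  shows "uniform_limit {0..t0} (\<lambda>n t. (step (t / real n) ^^ n) x) (\<lambda>t. U t x) sequentially"
  unfolding uniform_limit_iff eventually_sequentially dist_norm
proof (intro allI impI)
  fix e :: real assume e: "e > 0"
  define b where "b = onorm B1 + onorm B2"
  have b: "0 \<le> b" using onorm_pos_le[OF B1] onorm_pos_le[OF B2] by (simp add: b_def)
  define A where "A = t0 * exp (t0 * b)"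
  have A: "0 \<le> A" using t0 by (simp add: A_def)
  define \<epsilon> where "\<epsilon> = e / (2 * (A + 1))"
  have \<epsilon>: "\<epsilon> > 0" using e A by (simp add: \<epsilon>_def)
  have "A * \<epsilon> \<le> (A + 1) * \<epsilon>" using \<epsilon> by simp
  also have "\<dots> = e / 2"
    using A unfolding \<epsilon>_def by (simp add: field_simps)
  finally have A_\<epsilon>: "A * \<epsilon> < e" using e by simp
  obtain \<delta> where \<delta>: "\<delta> > 0"
    and consistent: "\<forall>\<tau>\<in>{0..\<delta>}. \<forall>s\<in>{0..t0}. norm (U \<tau> (U s x) - step \<tau> (U s x)) \<le> \<tau> * \<epsilon>"
    using step_consistent_on_orbit[OF x \<epsilon>(1)] by blast
  obtain N :: nat where N: "t0 / \<delta> < real N" using reals_Archimedean2 by blast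
  show "\<exists>N. \<forall>n\<ge>N. \<forall>t\<in>{0..t0}. norm ((step (t / real n) ^^ n) x - U t x) < e"
  proof (intro exI[of _ "Suc N"] allI impI ballI)
    fix n t assume n: "Suc N \<le> n" and t: "t \<in> {0..t0}"
    define \<tau> where "\<tau> = t / real n"
    have n_pos: "real n > 0" using n by simp
    have \<tau>: "0 \<le> \<tau>" "real n * \<tau> = t" using t n_pos by (simp_all add: \<tau>_def)
    have "t0 < real N * \<delta>" using N \<delta> by (simp add: divide_less_eq)
    also have "\<dots> \<le> real n * \<delta>" using n \<delta> by (intro mult_right_mono) auto
    finally have "real n * \<tau> < real n * \<delta>" using \<tau>(2) t by simp
    then have "\<tau> \<le> \<delta>" using n_pos by simp
    have "norm (U (real n * \<tau>) x - (step \<tau> ^^ n) x) \<le> real n * exp (\<tau> * b) ^ n * (\<tau> * \<epsilon>)"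
    proof (rule U.norm_S_minus_funpow_le[OF bounded_linear.linear[OF bounded_linear_split_T[OF E1 E2 B1 B2 \<tau>(1)]]])
      show "norm (step \<tau> v) \<le> exp (\<tau> * b) * norm v" for v
        unfolding b_def by (rule norm_split_T_le[OF E1 E2 B1 B2 \<tau>(1)])
      show "1 \<le> exp (\<tau> * b)" using \<tau> b by simp
      fix k assume "k < n"
      then have "real k * \<tau> \<in> {0..t0}"
        using \<tau> t mult_right_mono[of "real k" "real n" \<tau>] by auto
      then show "norm (U \<tau> (U (real k * \<tau>) x) - step \<tau> (U (real k * \<tau>) x)) \<le> \<tau> * \<epsilon>"
        using consistent \<tau>(1) \<open>\<tau> \<le> \<delta>\<close> by auto
    qed (use \<tau> \<epsilon> in auto)
    also have "\<dots> = t * exp (t * b) * \<epsilon>"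
      by (simp add: \<tau>(2)[symmetric] exp_of_nat_mult[symmetric] mult_ac)
    also have "\<dots> \<le> A * \<epsilon>"
      unfolding A_def using t b \<epsilon> by (intro mult_right_mono mult_mono) (auto intro: mult_right_mono)
    finally show "norm ((step (t / real n) ^^ n) x - U t x) < e"
      using A_\<epsilon> \<tau>(2) by (simp add: \<tau>_def norm_minus_commute)
  qed
qed

lemma uniform_limit_step_power:
  fixes t0 :: real
  assumes t0: "0 \<le> t0"
  shows "uniform_limit {0..t0} (\<lambda>n t. (step (t / real n) ^^ n) x) (\<lambda>t. U t x) sequentially"
  unfolding uniform_limit_iff
proof (intro allI impI)
  fix e :: real assume e: "e > 0"
  define c where "c = exp (t0 * (onorm B1 + onorm B2))"
  obtain K where K: "K \<ge> 1" "\<forall>t\<in>{0..t0}. onorm (U t) \<le> K"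
    using U.locally_bounded by blast
  define M where "M = c + K"
  have M: "M > 0" using K by (simp add: M_def c_def add_pos_pos)
  have "e / (2 * M) > 0" using e M by simp
  then obtain x' where x': "x' \<in> gen_dom U" "dist x' x < e / (2 * M)"
    using U.closure_gen_dom closure_approachable[of x "gen_dom U"] by blast
  have "\<forall>\<^sub>F n in sequentially. \<forall>t\<in>{0..t0}. dist ((step (t / real n) ^^ n) x') (U t x') < e / 2"
    using uniform_limit_step_power_on_gen_dom[OF x'(1) t0, unfolded uniform_limit_iff, rule_format,
        OF half_gt_zero[OF e]] .
  then show "\<forall>\<^sub>F n in sequentially. \<forall>t\<in>{0..t0}. dist ((step (t / real n) ^^ n) x) (U t x) < e"
  proof (rule eventually_mono, intro ballI)
    fix n t assume close: "\<forall>t\<in>{0..t0}. dist ((step (t / real n) ^^ n) x') (U t x') < e / 2"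
      and t: "t \<in> {0..t0}"
    let ?P = "step (t / real n) ^^ n"
    have lin: "linear ?P"
      using t by (intro bounded_linear.linear bounded_linear_funpow bounded_linear_split_T E1 E2 B1 B2) simp
    have "dist (?P x) (U t x) = norm (?P (x - x') + (?P x' - U t x') + U t (x' - x))"
      using t by (simp add: dist_norm linear_diff[OF lin] U.S_diff)
    also have "\<dots> \<le> norm (?P (x - x')) + norm (?P x' - U t x') + norm (U t (x' - x))"
      using norm_triangle_ineq[of "?P (x - x') + (?P x' - U t x')" "U t (x' - x)"]
        norm_triangle_ineq[of "?P (x - x')" "?P x' - U t x'"] by linarith
    also have "norm (?P (x - x')) \<le> c * norm (x - x')"
    proof -
      have "norm (?P (x - x')) \<le> exp (t * (onorm B1 + onorm B2)) * norm (x - x')"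
        using t by (intro norm_step_power_le) simp
      also have "\<dots> \<le> c * norm (x - x')"
        unfolding c_def using t onorm_pos_le[OF B1] onorm_pos_le[OF B2]
        by (intro mult_right_mono) (auto intro: mult_right_mono)
      finally show ?thesis .
    qed
    also have "norm (?P x' - U t x') < e / 2"
      using close t by (simp add: dist_norm)
    also have "norm (U t (x' - x)) \<le> K * norm (x' - x)"
      using K t by (intro U.norm_S_le) auto
    finally have "dist (?P x) (U t x) < M * dist x' x + e / 2"
      by (simp add: M_def dist_norm norm_minus_commute algebra_simps)
    also have "M * dist x' x \<le> e / 2"
      using x'(2) M by (simp add: field_simps)
    finally show "dist (?P x) (U t x) < e" by simp
  qed
qed

end

theorem proposition3p2:
  fixes E1 :: "real \<Rightarrow> 'a::banach \<Rightarrow> 'a"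
    and E2 :: "real \<Rightarrow> 'b::banach \<Rightarrow> 'b"
    and B1 :: "'b \<Rightarrow> 'a" and B2 :: "'a \<Rightarrow> 'b"
    and U :: "real \<Rightarrow> 'a \<times> 'b \<Rightarrow> 'a \<times> 'b"
  assumes E1: "contraction_semigroup E1"
    and E2: "contraction_semigroup E2"
    and B1: "bounded_linear B1"
    and B2: "bounded_linear B2"
    and U_sg: "C0_semigroup U"
    and U_dom: "gen_dom U = gen_dom E1 \<times> gen_dom E2"
    and U_gen: "\<And>u v. u \<in> gen_dom E1 \<Longrightarrow> v \<in> gen_dom E2 \<Longrightarrow>
                  gen U (u, v) = (gen E1 u + B1 v, B2 u + gen E2 v)"
  shows "(\<forall>t\<ge>0. \<forall>n::nat. n > 0 \<longrightarrow>
            onorm (split_T E1 E2 B1 B2 (t / real n) ^^ n) \<le> exp (t * (onorm B1 + onorm B2)))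
       \<and> (\<forall>t\<ge>0. \<forall>x. (\<lambda>n. (split_T E1 E2 B1 B2 (t / real n) ^^ n) x) \<longlonglongrightarrow> U t x)
       \<and> (\<forall>t0\<ge>0. \<forall>x. uniform_limit {0..t0}
            (\<lambda>n t. (split_T E1 E2 B1 B2 (t / real n) ^^ n) x) (\<lambda>t. U t x) sequentially)"
proof -
  interpret split_step E1 E2 B1 B2 U
    by (rule split_step.intro[OF E1 E2 B1 B2 U_sg U_dom U_gen])
  show ?thesis
  proof (intro conjI allI impI)
    fix t :: real and n :: nat assume "0 \<le> t"
    then show "onorm (split_T E1 E2 B1 B2 (t / real n) ^^ n) \<le> exp (t * (onorm B1 + onorm B2))"
      by (rule onorm_split_T_power_le[OF E1 E2 B1 B2])
  next
    fix t :: real and x assume t: "0 \<le> t"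
    show "(\<lambda>n. (split_T E1 E2 B1 B2 (t / real n) ^^ n) x) \<longlonglongrightarrow> U t x"
      using tendsto_uniform_limitI[OF uniform_limit_step_power[OF t, of x], of t] t by simp
  next
    fix t0 :: real and x assume "0 \<le> t0"
    then show "uniform_limit {0..t0} (\<lambda>n t. (split_T E1 E2 B1 B2 (t / real n) ^^ n) x) (\<lambda>t. U t x) sequentially"
      by (rule uniform_limit_step_power)
  qed
qed

end
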